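(* Let $\mu<\lambda$ with $\nu=\sqrt{\lambda^2-\mu^2}\in(0,1)$, and let $\alpha\in\mathbb R$, $\vartheta\in(0,\pi)$. Then $PCT\,f_{(\alpha,\vartheta)\,\nu,\mathbf p}$ is a constant multiple of $f_{(\alpha,\vartheta)\,\nu,\mathbf p}$ (for all $\mathbf p$) only if $\vartheta=\pi\nu$; and for every $\alpha\in\mathbb R$, $$PCT\,f_{(\alpha,\pi\nu)\,\nu,\mathbf p}=-i\,f_{(\alpha,\pi\nu)\,\nu,\mathbf p}.$$
   Context: Fix $\omega>0$; work in the conformal chart $(t,\mathbf x)$, $t<0$, $\mathbf x\in\mathbb R^3$, of de Sitter spacetime. Let $\mu=m/\omega$ ($m$ the mass), $\lambda>0$ the coupling constant, $\mu<\lambda$, $\nu=\sqrt{\lambda^2-\mu^2}$. $J_a$ is the Bessel function of the first kind. Square-root convention: for $x>0$, $\sqrt x>0$ and $\sqrt{-x}=-i\sqrt x$; $\sqrt{ab}$ is read as $\sqrt a\sqrt b$. For $\alpha\in\mathbb R$, real $\vartheta$ with $\sin\vartheta\ne0$, define $$f_{(\alpha,\vartheta)\,\nu,\mathbf p}(t,\mathbf x)=\sqrt{\frac{\pi}{\omega}}\frac{i}{2\sqrt{\sin\pi\nu}\sqrt{\sin\vartheta}}\frac{(-\omega t)^{3/2}}{(2\pi)^{3/2}}\Big[e^{-\frac12 i\vartheta-\alpha}J_\nu(-pt)-e^{\frac12 i\vartheta+\alpha}J_{-\nu}(-pt)\Big]e^{i\mathbf x\cdot\mathbf p},\quad p=|\mathbf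 p|.$$ Operators: $(Pf)(t,\mathbf x)=f(t,-\mathbf x)$; $Cf=f^*$ (antilinear); $T$ replaces $t$ by $-t$ in this formula, where the multivalued factors are continued as $(-\omega(-t))^{3/2}=e^{\frac32 i\pi}(-\omega t)^{3/2}$ and $J_a(-s)=e^{i\pi a}J_a(s)$ for $s>0$ and any index $a$; $PCT=P\circ C\circ T$. *)

theory Defs
  imports "HOL-Analysis.Analysis"
begin

text \<open>Bessel function of the first kind J_a(x), real order a, via its power series
  (with the reciprocal Gamma function, entire, so negative non-integer orders are fine).
  Only used for x > 0.\<close>
definition besselJ :: "real \<Rightarrow> real \<Rightarrow> real" where
  "besselJ a x = (\<Sum>k. (-1) ^ k * rGamma (real k + a + 1) / fact k * (x / 2) powr (2 * real k + a))"

definition csqrt_conv :: "real \<Rightarrow> complex" where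
  "csqrt_conv x = (if 0 \<le> x then complex_of_real (sqrt x) else - \<i> * complex_of_real (sqrt (- x)))"

definition besselJc :: "real \<Rightarrow> real \<Rightarrow> complex" where
  "besselJc a z = (if 0 \<le> z then complex_of_real (besselJ a z)
                   else exp (\<i> * complex_of_real (pi * a)) * complex_of_real (besselJ a (- z)))"

definition pow32c :: "real \<Rightarrow> complex" where
  "pow32c y = (if 0 \<le> y then complex_of_real (y powr (3/2))
               else exp (\<i> * complex_of_real (3 * pi / 2)) * complex_of_real ((- y) powr (3/2)))"

text \<open>The formula for f_{(alpha,theta) nu,p}(t,x), extended to all real t by the continuations
  above (for t < 0 it is literally the formula of the paper).\<close>
definition f_formula :: "real \<Rightarrow> real \<Rightarrow> real \<Rightarrow> real \<Rightarrow> real^3 \<Rightarrow> real \<Rightarrow> real^3 \<Rightarrow> complex" where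
  "f_formula \<omega> \<nu> \<alpha> \<theta> p t x =
     complex_of_real (sqrt (pi / \<omega>)) * \<i>
       / (2 * csqrt_conv (sin (pi * \<nu>)) * csqrt_conv (sin \<theta>))
     * pow32c (- \<omega> * t) / complex_of_real ((2 * pi) powr (3/2))
     * (exp (- \<i> * complex_of_real (\<theta> / 2) - complex_of_real \<alpha>) * besselJc \<nu> (- norm p * t)
        - exp (\<i> * complex_of_real (\<theta> / 2) + complex_of_real \<alpha>) * besselJc (- \<nu>) (- norm p * t))
     * exp (\<i> * complex_of_real (x \<bullet> p))"

definition fmode :: "real \<Rightarrow> real \<Rightarrow> real \<Rightarrow> real \<Rightarrow> real^3 \<Rightarrow> real \<Rightarrow> real^3 \<Rightarrow> complex" where
  "fmode \<omega> \<nu> \<alpha> \<theta> p = (\<lambda>t x. f_formula \<omega> \<nu> \<alpha> \<theta> p t x)"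

definition T_fmode :: "real \<Rightarrow> real \<Rightarrow> real \<Rightarrow> real \<Rightarrow> real^3 \<Rightarrow> real \<Rightarrow> real^3 \<Rightarrow> complex" where
  "T_fmode \<omega> \<nu> \<alpha> \<theta> p = (\<lambda>t x. f_formula \<omega> \<nu> \<alpha> \<theta> p (- t) x)"

definition Pop :: "(real \<Rightarrow> real^3 \<Rightarrow> complex) \<Rightarrow> real \<Rightarrow> real^3 \<Rightarrow> complex" where
  "Pop f = (\<lambda>t x. f t (- x))"

definition Cop :: "(real \<Rightarrow> real^3 \<Rightarrow> complex) \<Rightarrow> real \<Rightarrow> real^3 \<Rightarrow> complex" where
  "Cop f = (\<lambda>t x. cnj (f t x))"

definition PCT_fmode :: "real \<Rightarrow> real \<Rightarrow> real \<Rightarrow> real \<Rightarrow> real^3 \<Rightarrow> real \<Rightarrow> real^3 \<Rightarrow> complex" where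
  "PCT_fmode \<omega> \<nu> \<alpha> \<theta> p = Pop (Cop (T_fmode \<omega> \<nu> \<alpha> \<theta> p))"

end

theory Submission
  imports Defs
begin

text \<open>Time reversal multiplies J_\<nu>(-pt), J_{-\<nu>}(-pt) and (-\<omega>t)^{3/2} by the phases
  e^{i\<pi>\<nu>}, e^{-i\<pi>\<nu>} and e^{3i\<pi>/2} of the continuations; complex conjugation then flips
  the phases e^{\<mp>i\<theta>/2} and the purely imaginary normalisation. Altogether PCT f is -i times f
  with the J_\<nu>-term rotated by e^{i(\<theta>-\<pi>\<nu>)} and the J_{-\<nu>}-term by e^{-i(\<theta>-\<pi>\<nu>)}. As J_\<nu>
  and J_{-\<nu>} are linearly independent (their leading powers x^{\<plusminus>\<nu>} at 0 differ),
  proportionality forces the two rotations to agree, i.e. sin (\<theta> - \<pi>\<nu>) = 0.\<close>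

definition bessel_coeff :: "real \<Rightarrow> nat \<Rightarrow> real" where
  "bessel_coeff a k = (-1) ^ k * rGamma (real k + a + 1) / fact k"

lemma bessel_coeff_recurrence:
  "bessel_coeff a n = - ((real n + a + 1) * (real n + 1)) * bessel_coeff a (Suc n)"
proof -
  have "rGamma (real n + a + 1) = (real n + a + 1) * rGamma (real (Suc n) + a + 1)"
    using rGamma_plus1[of "real n + a + 1"] by (simp add: add_ac)
  moreover have "fact (Suc n) = (real n + 1) * (fact n :: real)" by simp
  ultimately show ?thesis
    unfolding bessel_coeff_def by (simp add: divide_simps)
qed

lemma summable_bessel_series: "summable (\<lambda>k. bessel_coeff a k * y ^ k)"
proof (rule summable_ratio_test[of "1/2" "nat \<lceil>2 * \<bar>y\<bar> + \<bar>a\<bar>\<rceil> + 1"])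
  fix n assume "nat \<lceil>2 * \<bar>y\<bar> + \<bar>a\<bar>\<rceil> + 1 \<le> n"
  then have n: "real n \<ge> 2 * \<bar>y\<bar> + \<bar>a\<bar> + 1" by linarith
  define d where "d = (real n + a + 1) * (real n + 1)"
  have pos: "1 \<le> real n + a + 1" using n abs_ge_minus_self[of a] by linarith
  then have "real n + 1 \<le> d" unfolding d_def using mult_right_mono[of 1 _ "real n + 1"] by simp
  then have d: "2 * \<bar>y\<bar> \<le> d" using n by linarith
  have "norm (bessel_coeff a n * y ^ n) = d * \<bar>bessel_coeff a (Suc n)\<bar> * \<bar>y\<bar> ^ n"
    using pos by (subst bessel_coeff_recurrence) (simp add: d_def abs_mult power_abs)
  moreover have "norm (bessel_coeff a (Suc n) * y ^ Suc n) = \<bar>y\<bar> * (\<bar>bessel_coeff a (Suc n)\<bar> * \<bar>y\<bar> ^ n)"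
    by (simp add: abs_mult power_abs)
  ultimately show "norm (bessel_coeff a (Suc n) * y ^ Suc n) \<le> 1/2 * norm (bessel_coeff a n * y ^ n)"
    using mult_right_mono[OF d, of "\<bar>bessel_coeff a (Suc n)\<bar> * \<bar>y\<bar> ^ n"] by (simp add: mult_ac)
qed simp

definition bessel_reduced :: "real \<Rightarrow> real \<Rightarrow> real" where
  "bessel_reduced a y = (\<Sum>k. bessel_coeff a k * y ^ k)"

lemma besselJ_eq_powr_bessel_reduced:
  assumes "x > 0"
  shows "besselJ a x = (x / 2) powr a * bessel_reduced a ((x / 2)\<^sup>2)"
proof -
  have "(x / 2) powr (2 * real k + a) = (x / 2) powr a * ((x / 2)\<^sup>2) ^ k" for k
  proof -
    have "(x / 2) powr (2 * real k) = (x / 2) ^ (2 * k)"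
      using assms powr_realpow [of "x / 2" "2 * k"] by simp
    then show ?thesis by (simp add: powr_add power_mult)
  qed
  then have "besselJ a x = (\<Sum>k. (x / 2) powr a * (bessel_coeff a k * ((x / 2)\<^sup>2) ^ k))"
    unfolding besselJ_def bessel_coeff_def by (simp add: mult_ac)
  also have "\<dots> = (x / 2) powr a * bessel_reduced a ((x / 2)\<^sup>2)"
    unfolding bessel_reduced_def by (rule suminf_mult [OF summable_bessel_series])
  finally show ?thesis .
qed

lemma tendsto_bessel_reduced:
  "((\<lambda>u. bessel_reduced a (u\<^sup>2)) \<longlongrightarrow> rGamma (a + 1)) (at_right 0)"
proof -
  have "isCont (\<lambda>u. bessel_reduced a (u\<^sup>2)) 0"
    unfolding bessel_reduced_def
    by (intro continuous_intros isCont_o2 [OF _ isCont_powser_converges_everywhere [OF summable_bessel_series]])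
  moreover have "bessel_reduced a 0 = rGamma (a + 1)"
    unfolding bessel_reduced_def powser_zero by (simp add: bessel_coeff_def)
  ultimately show ?thesis
    by (auto simp: isCont_def intro: filterlim_mono [OF _ order_refl at_le])
qed

lemma besselJ_linear_independent:
  fixes a b :: complex
  assumes "\<nu> > 0" "\<nu> \<notin> \<nat>"
    and vanish: "\<And>x. x > 0 \<Longrightarrow> a * of_real (besselJ \<nu> x) + b * of_real (besselJ (- \<nu>) x) = 0"
  shows "a = 0 \<and> b = 0"
proof -
  let ?G = "\<lambda>a u. complex_of_real (bessel_reduced a (u\<^sup>2))"
  have reduced: "a * of_real (u powr (2 * \<nu>)) * ?G \<nu> u + b * ?G (- \<nu>) u = 0" if "u > 0" for u
  proof -
    have "of_real (u powr \<nu>) * (a * of_real (besselJ \<nu> (2 * u)) + b * of_real (besselJ (- \<nu>) (2 * u))) = 0"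
      using vanish [of "2 * u"] that by simp
    moreover have "u powr \<nu> * (u powr \<nu> * g) = u powr (2 * \<nu>) * g"
      and "u powr \<nu> * (u powr (- \<nu>) * g) = g" for g
      using that by (simp_all add: powr_add [symmetric] mult.assoc [symmetric])
    ultimately show ?thesis
      using that by (simp add: besselJ_eq_powr_bessel_reduced algebra_simps flip: of_real_mult)
  qed
  have limit_zero: "L = 0" if "(f \<longlongrightarrow> L) (at_right 0)" "\<And>u. u > 0 \<Longrightarrow> f u = 0"
    for f :: "real \<Rightarrow> complex" and L
  proof -
    have "eventually (\<lambda>u. f u = 0) (at_right 0)"
      using that(2) by (auto intro: eventually_mono [OF eventually_at_right_less])
    then have "(f \<longlongrightarrow> 0) (at_right 0)" by (rule tendsto_eventually)
    with that(1) show ?thesis by (rule tendsto_unique [rotated]) simp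
  qed
  have "((\<lambda>u. u powr (2 * \<nu>)) \<longlongrightarrow> 0) (at_right 0)"
    using assms(1) by (intro tendsto_zero_powrI [where b = "2 * \<nu>"] tendsto_ident_at tendsto_const)
      (auto intro: eventually_mono [OF eventually_at_right_less])
  then have "((\<lambda>u. a * of_real (u powr (2 * \<nu>)) * ?G \<nu> u + b * ?G (- \<nu>) u)
      \<longlongrightarrow> a * of_real 0 * of_real (rGamma (\<nu> + 1)) + b * of_real (rGamma (- \<nu> + 1))) (at_right 0)"
    by (intro tendsto_intros tendsto_bessel_reduced)
  from limit_zero [OF this reduced] have "b * of_real (rGamma (1 - \<nu>)) = 0" by simp
  moreover have "1 - \<nu> \<notin> \<int>\<^sub>\<le>\<^sub>0"
  proof
    assume "1 - \<nu> \<in> \<int>\<^sub>\<le>\<^sub>0"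
    then obtain n :: nat where "1 - \<nu> = - real n" by (auto elim: nonpos_Ints_cases')
    then have "\<nu> = of_nat (Suc n)" by simp
    with assms(2) show False by simp
  qed
  ultimately have b: "b = 0" by (simp add: rGamma_eq_zero_iff)
  have "((\<lambda>u. a * ?G \<nu> u) \<longlongrightarrow> a * of_real (rGamma (\<nu> + 1))) (at_right 0)"
    by (intro tendsto_intros tendsto_bessel_reduced)
  moreover have "a * ?G \<nu> u = 0" if "u > 0" for u
    using reduced [OF that] that by (simp add: b)
  ultimately have "a * of_real (rGamma (\<nu> + 1)) = 0" by (rule limit_zero)
  with assms(1) have "a = 0" by (auto simp: rGamma_eq_zero_iff nonpos_Ints_def)
  with b show ?thesis by simp
qed

definition mode_norm :: "real \<Rightarrow> real \<Rightarrow> real \<Rightarrow> complex" where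
  "mode_norm \<omega> \<nu> \<theta> = complex_of_real (sqrt (pi / \<omega>)) * \<i>
     / (2 * csqrt_conv (sin (pi * \<nu>)) * csqrt_conv (sin \<theta>)) / complex_of_real ((2 * pi) powr (3/2))"

definition weight_pos :: "real \<Rightarrow> real \<Rightarrow> complex" where
  "weight_pos \<alpha> \<theta> = exp (- \<i> * complex_of_real (\<theta> / 2) - complex_of_real \<alpha>)"

definition weight_neg :: "real \<Rightarrow> real \<Rightarrow> complex" where
  "weight_neg \<alpha> \<theta> = exp (\<i> * complex_of_real (\<theta> / 2) + complex_of_real \<alpha>)"

lemma cnj_mode_norm:
  assumes "sin (pi * \<nu>) \<ge> 0" "sin \<theta> \<ge> 0"
  shows "cnj (mode_norm \<omega> \<nu> \<theta>) = - mode_norm \<omega> \<nu> \<theta>"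
  using assms by (simp add: mode_norm_def csqrt_conv_def)

lemma mode_norm_nonzero:
  assumes "\<omega> > 0" "sin (pi * \<nu>) > 0" "sin \<theta> > 0"
  shows "mode_norm \<omega> \<nu> \<theta> \<noteq> 0"
  using assms by (simp add: mode_norm_def csqrt_conv_def)

lemma cnj_weight_pos:
  "cnj (weight_pos \<alpha> \<theta>) * exp (- \<i> * of_real (pi * \<nu>)) = cis (\<theta> - pi * \<nu>) * weight_pos \<alpha> \<theta>"
  unfolding weight_pos_def cis_conv_exp exp_cnj exp_add [symmetric]
  by (rule arg_cong [where f = exp]) (simp add: algebra_simps)

lemma cnj_weight_neg:
  "cnj (weight_neg \<alpha> \<theta>) * exp (\<i> * of_real (pi * \<nu>)) = cis (pi * \<nu> - \<theta>) * weight_neg \<alpha> \<theta>"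
  unfolding weight_neg_def cis_conv_exp exp_cnj exp_add [symmetric]
  by (rule arg_cong [where f = exp]) (simp add: algebra_simps)

lemma fmode_eq:
  assumes "\<omega> > 0" "t < 0"
  shows "fmode \<omega> \<nu> \<alpha> \<theta> p t x = mode_norm \<omega> \<nu> \<theta> * of_real ((- \<omega> * t) powr (3/2))
     * (weight_pos \<alpha> \<theta> * of_real (besselJ \<nu> (- norm p * t))
        - weight_neg \<alpha> \<theta> * of_real (besselJ (- \<nu>) (- norm p * t)))
     * exp (\<i> * of_real (x \<bullet> p))"
proof -
  have "0 \<le> - \<omega> * t" "0 \<le> - norm p * t"
    using assms by (simp_all add: mult_nonneg_nonpos)
  then have "pow32c (- \<omega> * t) = of_real ((- \<omega> * t) powr (3/2))"
    and "besselJc a (- norm p * t) = of_real (besselJ a (- norm p * t))" for a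
    by (simp_all add: pow32c_def besselJc_def)
  then show ?thesis
    unfolding fmode_def f_formula_def mode_norm_def weight_pos_def weight_neg_def
    by (simp only: divide_inverse mult_ac)
qed

lemma PCT_fmode_eq:
  assumes "\<omega> > 0" "t < 0" "p \<noteq> 0"
  shows "PCT_fmode \<omega> \<nu> \<alpha> \<theta> p t x = cnj (mode_norm \<omega> \<nu> \<theta>) * \<i> * of_real ((- \<omega> * t) powr (3/2))
     * (cis (\<theta> - pi * \<nu>) * weight_pos \<alpha> \<theta> * of_real (besselJ \<nu> (- norm p * t))
        - cis (pi * \<nu> - \<theta>) * weight_neg \<alpha> \<theta> * of_real (besselJ (- \<nu>) (- norm p * t)))
     * exp (\<i> * of_real (x \<bullet> p))"
proof -
  have "- \<omega> * - t < 0" "- norm p * - t < 0"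
    using assms by (simp_all add: mult_pos_neg)
  then have pow: "pow32c (- \<omega> * - t) = exp (\<i> * of_real (3 * pi / 2)) * of_real ((- \<omega> * t) powr (3/2))"
    and bessel: "besselJc a (- norm p * - t) = exp (\<i> * of_real (pi * a)) * of_real (besselJ a (- norm p * t))"
    for a by (simp_all add: pow32c_def besselJc_def)
  have cnj_pow: "cnj (exp (\<i> * of_real (3 * pi / 2))) = \<i>"
  proof -
    have "cis (3 * pi / 2) = cis (pi / 2 + pi)" by (simp add: field_simps)
    also have "\<dots> = cis (pi / 2) * cis pi" by (rule cis_mult [symmetric])
    finally show ?thesis by (simp only: cis_conv_exp [symmetric]) simp
  qed
  have cnj_bessel: "cnj (exp (\<i> * of_real (pi * a))) = exp (- \<i> * of_real (pi * a))" for a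
    by (simp add: exp_cnj)
  have cnj_plane_wave: "cnj (exp (\<i> * of_real ((- x) \<bullet> p))) = exp (\<i> * of_real (x \<bullet> p))"
    by (simp add: exp_cnj)
  have minus_nu: "exp (- \<i> * of_real (pi * - \<nu>)) = exp (\<i> * of_real (pi * \<nu>))"
    by simp
  have cnj_shape: "\<And>X D P R A J1 B J2 E e1 e2 :: complex.
     cnj (X / D * P / R * (A * (e1 * J1) - B * (e2 * J2)) * E) =
     cnj (X / D / R) * cnj P * (cnj A * cnj e1 * cnj J1 - cnj B * cnj e2 * cnj J2) * cnj E"
    by (simp add: divide_inverse mult_ac)
  have "PCT_fmode \<omega> \<nu> \<alpha> \<theta> p t x = cnj (mode_norm \<omega> \<nu> \<theta>) * \<i> * of_real ((- \<omega> * t) powr (3/2))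
     * (cnj (weight_pos \<alpha> \<theta>) * exp (- \<i> * of_real (pi * \<nu>)) * of_real (besselJ \<nu> (- norm p * t))
        - cnj (weight_neg \<alpha> \<theta>) * exp (\<i> * of_real (pi * \<nu>)) * of_real (besselJ (- \<nu>) (- norm p * t)))
     * exp (\<i> * of_real (x \<bullet> p))"
    unfolding PCT_fmode_def Pop_def Cop_def T_fmode_def f_formula_def mode_norm_def [symmetric]
      weight_pos_def [symmetric] weight_neg_def [symmetric] pow bessel cnj_shape
    by (simp only: complex_cnj_mult complex_cnj_complex_of_real cnj_pow cnj_bessel cnj_plane_wave
        minus_minus mult.assoc minus_nu)
  then show ?thesis
    by (simp only: cnj_weight_pos cnj_weight_neg)
qed

lemma PCT_fmode_at_pi_nu:
  assumes "\<omega> > 0" "0 < \<nu>" "\<nu> < 1" "p \<noteq> 0" "t < 0"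
  shows "PCT_fmode \<omega> \<nu> \<alpha> (pi * \<nu>) p t x = - \<i> * fmode \<omega> \<nu> \<alpha> (pi * \<nu>) p t x"
proof -
  have "sin (pi * \<nu>) > 0" using assms by (intro sin_gt_zero) auto
  then show ?thesis
    by (simp add: PCT_fmode_eq fmode_eq cnj_mode_norm assms algebra_simps)
qed

lemma PCT_fmode_proportional_imp:
  assumes "\<omega> > 0" "0 < \<nu>" "\<nu> < 1" "0 < \<theta>" "\<theta> < pi"
    and "p \<noteq> 0"
    and proportional: "\<And>t x. t < 0 \<Longrightarrow> PCT_fmode \<omega> \<nu> \<alpha> \<theta> p t x = c * fmode \<omega> \<nu> \<alpha> \<theta> p t x"
  shows "\<theta> = pi * \<nu>"
proof -
  define d where "d = \<theta> - pi * \<nu>"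
  have "sin (pi * \<nu>) > 0" "sin \<theta> > 0" using assms by (auto intro: sin_gt_zero)
  then have Q: "mode_norm \<omega> \<nu> \<theta> \<noteq> 0" "cnj (mode_norm \<omega> \<nu> \<theta>) = - mode_norm \<omega> \<nu> \<theta>"
    using assms(1) by (simp_all add: mode_norm_nonzero cnj_mode_norm)
  have vanish: "(- \<i> * cis d - c) * weight_pos \<alpha> \<theta> * of_real (besselJ \<nu> y)
      + (\<i> * cis (- d) + c) * weight_neg \<alpha> \<theta> * of_real (besselJ (- \<nu>) y) = 0" if "y > 0" for y
  proof -
    define t where "t = - y / norm p"
    have "t < 0" "- norm p * t = y" using that \<open>p \<noteq> 0\<close> by (simp_all add: t_def)
    moreover note proportional [OF \<open>t < 0\<close>, of 0]
    ultimately have "mode_norm \<omega> \<nu> \<theta> * of_real ((- \<omega> * t) powr (3/2))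
        * ((- \<i> * cis d - c) * weight_pos \<alpha> \<theta> * of_real (besselJ \<nu> y)
           + (\<i> * cis (- d) + c) * weight_neg \<alpha> \<theta> * of_real (besselJ (- \<nu>) y)) = 0"
      using Q by (simp add: PCT_fmode_eq fmode_eq assms(1,6) d_def algebra_simps)
    moreover have "(- \<omega> * t) powr (3/2) \<noteq> 0" using \<open>t < 0\<close> assms(1) by (simp add: mult_neg_pos)
    ultimately show ?thesis using Q by simp
  qed
  have "\<nu> \<notin> \<nat>" using assms(2,3) by (auto elim: Nats_cases)
  from besselJ_linear_independent [OF assms(2) this vanish]
  have coeffs: "- \<i> * cis d - c = 0" "\<i> * cis (- d) + c = 0"
    by (simp_all add: weight_pos_def weight_neg_def)
  have "\<i> * (cis (- d) - cis d) = (\<i> * cis (- d) + c) + (- \<i> * cis d - c)"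
    by (simp add: algebra_simps)
  then have "cis (- d) = cis d" using coeffs by simp
  then have "sin (- d) = sin d" by (metis cis.sel(2))
  then have "sin d = 0" by simp
  moreover have "0 < pi * \<nu>" "pi * \<nu> < pi" using assms(2,3) by simp_all
  then have "- pi < d" "d < pi"
    using assms(4,5) unfolding d_def by linarith+
  ultimately have "d = 0" using sin_eq_0_pi by blast
  then show ?thesis by (simp add: d_def)
qed

theorem corollary6:
  fixes \<omega> \<mu> lam \<nu> :: real
  assumes "\<omega> > 0" and "lam > 0" and "\<mu> < lam"
    and "\<nu> = sqrt (lam\<^sup>2 - \<mu>\<^sup>2)" and "0 < \<nu>" and "\<nu> < 1"
  shows "(\<forall>\<alpha> \<theta>. 0 < \<theta> \<and> \<theta> < pi \<and>
            (\<forall>p::real^3. p \<noteq> 0 \<longrightarrow> (\<exists>c::complex. \<forall>t<0. \<forall>x.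
               PCT_fmode \<omega> \<nu> \<alpha> \<theta> p t x = c * fmode \<omega> \<nu> \<alpha> \<theta> p t x))
            \<longrightarrow> \<theta> = pi * \<nu>)
       \<and> (\<forall>\<alpha> (p::real^3) t x. p \<noteq> 0 \<longrightarrow> t < 0 \<longrightarrow>
            PCT_fmode \<omega> \<nu> \<alpha> (pi * \<nu>) p t x = - \<i> * fmode \<omega> \<nu> \<alpha> (pi * \<nu>) p t x)"
  \<comment> \<open>only \<open>0 < \<nu> < 1\<close> is used\<close>
proof (intro conjI allI impI)
  fix \<alpha> \<theta> :: real
  assume "0 < \<theta> \<and> \<theta> < pi \<and>
            (\<forall>p::real^3. p \<noteq> 0 \<longrightarrow> (\<exists>c::complex. \<forall>t<0. \<forall>x.
               PCT_fmode \<omega> \<nu> \<alpha> \<theta> p t x = c * fmode \<omega> \<nu> \<alpha> \<theta> p t x))"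
  moreover have "axis 1 1 \<noteq> (0 :: real^3)" by (simp add: axis_eq_0_iff)
  ultimately obtain c where "0 < \<theta>" "\<theta> < pi"
    and "\<And>t x. t < 0 \<Longrightarrow>
      PCT_fmode \<omega> \<nu> \<alpha> \<theta> (axis 1 1) t x = c * fmode \<omega> \<nu> \<alpha> \<theta> (axis 1 1) t x"
    by blast
  with assms show "\<theta> = pi * \<nu>"
    by (intro PCT_fmode_proportional_imp [of \<omega> \<nu> \<theta> "axis 1 1"]) auto
qed (use assms PCT_fmode_at_pi_nu in auto)

end
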